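(* Let $m>2$ and $k\ge3$ be integers, and let $r(m)\in(0,1)$ be the unique zero of $B_m$ in $(0,1)$. Let $c>0$ be small enough that $\ker L_{r(m)}\subset X^k_c$ is one-dimensional, and let $h_0$ span this kernel. Define $$\partial_rL_rh_0\big|_{r=r(m)}=\sum_{j\ge1}\frac{d}{dr}\Big(K_j(r)a_{j-2}+y_j(r)a_j+K_j(r)a_{j+2}\Big)\Big|_{r=r(m)}\sin(jx),$$ where $h_0=\sum_j a_j\cos(jx)$ is held fixed. Then $$\partial_rL_rh_0\big|_{r=r(m)}\notin\operatorname{Range}(L_{r(m)}).$$ In fact its $\sin(mx)$-coefficient is nonzero.
   Context: **Coefficients.** For integers $j\ge1$ and $r\in(0,1)$, let $$B_j(r)=-1-2r+2jr-r^2-\frac{(1-r)^j}{(1+r)^{j-2}},\qquad K_j(r)=-\frac{1-r}{8(1+r)^2}B_j(r),$$ $$y_1(r)=-\frac{3r+1}{4(1+r)^2},\qquad y_j(r)=\frac{B_j(r)}{4(1+r)}\ \ (j\ge2).$$ **The operator.** For $h=\sum_{j\ge1}a_j\cos(jx)$ define $$L_rh=\sum_{j\ge1}\big(K_j(r)a_{j-2}+y_j(r)a_j+K_j(r)a_{j+2}\big)\sin(jx),$$ with $a_j=0$ for $j\le0$. **Function spaces.** $X^k_c$ is the space of real $2\pi$-periodic $f=\sum_{j\ge1}a_j\cos(jx)$ extending analytically to $|\operatorname{Im}z|\le c$ with $$\sum_\pm\int|f(x\pm ic)|^2+\sum_\pm\int|\partial^kf(x\pm ic)|^2<\infty.$$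 $Y^{k}_c$ is defined in the same way with sines. *)

theory Defs
  imports "HOL-Analysis.Analysis"
begin

text \<open>Coefficients. The exponent j-2 may be negative (j = 1), hence powi.\<close>

definition Bc :: "nat \<Rightarrow> real \<Rightarrow> real" where
  "Bc j r = -1 - 2*r + 2 * real j * r - r^2 - (1 - r)^j / ((1 + r) powi (int j - 2))"

definition Kc :: "nat \<Rightarrow> real \<Rightarrow> real" where
  "Kc j r = - (1 - r) / (8 * (1 + r)^2) * Bc j r"

definition yc :: "nat \<Rightarrow> real \<Rightarrow> real" where
  "yc j r = (if j = 1 then - (3*r + 1) / (4 * (1 + r)^2) else Bc j r / (4 * (1 + r)))"

text \<open>A function h = sum_{j>=1} a_j cos(jx) is represented by its coefficient sequence
  a :: nat => real (with a 0 = 0); L_r h = sum_{j>=1} b_j sin(jx) is represented by the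
  sequence b (with b 0 = 0).  a_{j-2} = 0 for j <= 2.\<close>

definition Lop :: "real \<Rightarrow> (nat \<Rightarrow> real) \<Rightarrow> (nat \<Rightarrow> real)" where
  "Lop r a j = (if j = 0 then 0
     else Kc j r * (if j \<ge> 3 then a (j - 2) else 0) + yc j r * a j + Kc j r * a (j + 2))"

definition dLop :: "real \<Rightarrow> (nat \<Rightarrow> real) \<Rightarrow> (nat \<Rightarrow> real)" where
  "dLop r a j = deriv (\<lambda>s. Lop s a j) r"

text \<open>The space X^k_c, as a set of cosine coefficient sequences: the function
  f(x) = sum_{j>=1} a_j cos(jx) extends analytically (holomorphically on an open
  neighbourhood) to the closed strip |Im z| <= c, and the L^2 norms over one period of
  the extension and of its k-th derivative on the lines Im z = c and Im z = -c are finite.\<close>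

definition Xc :: "nat \<Rightarrow> real \<Rightarrow> (nat \<Rightarrow> real) set" where
  "Xc k c = {a. a 0 = 0 \<and>
     (\<exists>F S. open S \<and> {z. \<bar>Im z\<bar> \<le> c} \<subseteq> S \<and> F holomorphic_on S \<and>
        (\<forall>x::real. (\<lambda>j. complex_of_real (a j * cos (real j * x))) sums F (complex_of_real x)) \<and>
        (\<forall>\<sigma>\<in>{c, -c}.
           (\<lambda>x. (cmod (F (Complex x \<sigma>)))^2) integrable_on {0..2*pi} \<and>
           (\<lambda>x. (cmod ((deriv ^^ k) F (Complex x \<sigma>)))^2) integrable_on {0..2*pi}))}"

end

theory Submission
  imports Defs
begin

(* For j >= 2 both K_j and y_j are multiples of B_j, so the j-th coefficient of L_r h is
   B_j(r) times a cofactor. At r = r(m) the m-th coefficient of every element of the range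
   therefore vanishes, while the m-th coefficient of the r-derivative of L_r h_0 is
   B_m'(r) > 0 times the cofactor of h_0. If that cofactor were zero, then, because B_j(r) is
   strictly increasing in j and hence nonzero for j <> m, every row of L_r h_0 = 0 would give
   a_(j-2) + a_(j+2) = l a_j with l = 2(1+r)/(1-r) > 2, and the first row gives
   a_3 = (3r+1)/(1-r) a_1. From these initial conditions the even and the odd subsequence grow
   monotonically in absolute value unless they vanish, which contradicts a_j -> 0. *)

lemma Bc_eq_ratio_power:
  assumes "r \<noteq> -1"
  shows "Bc j r = -1 - 2 * r + 2 * real j * r - r^2 - (1 + r)^2 * ((1 - r) / (1 + r))^j"
proof -
  have "(1 + r) powi (int j - 2) = (1 + r)^j / (1 + r)^2"
    using assms by (simp add: power_int_diff)
  then show ?thesis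
    using assms unfolding Bc_def by (simp add: power_divide field_simps)
qed

lemma Bc_1: "r \<noteq> -1 \<Longrightarrow> Bc 1 r = -2"
  by (simp add: Bc_eq_ratio_power field_simps power2_eq_square)

lemma strict_mono_Bc:
  assumes "0 < r" "r \<le> 1"
  shows "strict_mono (\<lambda>j. Bc j r)"
proof (rule strict_mono_Suc_iff[THEN iffD2], intro allI)
  fix j
  define q where "q = (1 - r) / (1 + r)"
  have q: "0 \<le> q" "q \<le> 1"
    using assms by (auto simp: q_def field_simps)
  have "Bc (Suc j) r - Bc j r = 2 * r + (1 + r)^2 * q^j * (1 - q)"
    using assms by (simp add: Bc_eq_ratio_power q_def[symmetric] algebra_simps)
  moreover have "0 \<le> (1 + r)^2 * q^j * (1 - q)"
    using q by simp
  ultimately show "Bc j r < Bc (Suc j) r"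
    using assms by linarith
qed

definition dBc :: "nat \<Rightarrow> real \<Rightarrow> real" where
  "dBc j x = 2 * (real j - 1 - x) + 2 * (real j - 1 + x) * ((1 - x) / (1 + x))^(j - 1)"

lemma has_real_derivative_Bc:
  assumes "1 \<le> j" "-1 < x"
  shows "((\<lambda>s. Bc j s) has_real_derivative dBc j x) (at x)"
proof (rule has_field_derivative_transform_within_open)
  define q where "q = (1 - x) / (1 + x)"
  have q_mult: "(1 + x) * q = 1 - x"
    using assms(2) by (simp add: q_def)
  have pow: "q^j = q * q^(j - 1)"
    using assms(1) by (simp flip: power_Suc)
  have cancel: "(2 + 2 * x) * (q * q^(j - 1)) = 2 * (1 - x) * q^(j - 1)"
    by (simp flip: q_mult)
  show "((\<lambda>s. -1 - 2 * s + 2 * real j * s - s^2 - (1 + s)^2 * ((1 - s) / (1 + s))^j)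
         has_real_derivative dBc j x) (at x)"
    unfolding dBc_def using assms(2)
    by (auto intro!: derivative_eq_intros, simp only: q_def[symmetric] pow cancel,
        simp add: power2_eq_square, simp add: algebra_simps)
  show "-1 - 2 * s + 2 * real j * s - s^2 - (1 + s)^2 * ((1 - s) / (1 + s))^j = Bc j s"
    if "s \<in> {-1<..}" for s
    using that by (simp add: Bc_eq_ratio_power)
qed (use assms in auto)

lemma dBc_pos:
  assumes "2 \<le> j" "-1 < x" "x < 1"
  shows "0 < dBc j x"
proof -
  have "0 \<le> 2 * (real j - 1 + x) * ((1 - x) / (1 + x))^(j - 1)"
    using assms by simp
  moreover have "0 < real j - 1 - x"
    using assms by simp
  ultimately show ?thesis
    unfolding dBc_def by (intro add_pos_nonneg) simp_all
qed

definition Lop_cofactor :: "real \<Rightarrow> (nat \<Rightarrow> real) \<Rightarrow> nat \<Rightarrow> real" where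
  "Lop_cofactor r a j =
     a j / (4 * (1 + r)) - (1 - r) / (8 * (1 + r)^2) * ((if j \<ge> 3 then a (j - 2) else 0) + a (j + 2))"

lemma Lop_eq_Bc_mult_cofactor:
  assumes "2 \<le> j"
  shows "Lop r a j = Bc j r * Lop_cofactor r a j"
  using assms unfolding Lop_def Kc_def yc_def Lop_cofactor_def
  by (simp add: algebra_simps diff_divide_distrib)

lemma Lop_eq_0_if_Bc_eq_0: "2 \<le> j \<Longrightarrow> Bc j r = 0 \<Longrightarrow> Lop r a j = 0"
  by (simp add: Lop_eq_Bc_mult_cofactor)

lemma Lop_cofactor_eq_0_iff:
  assumes "-1 < r" "r < 1"
  shows "Lop_cofactor r a j = 0 \<longleftrightarrow>
           (if j \<ge> 3 then a (j - 2) else 0) + a (j + 2) = 2 * (1 + r) / (1 - r) * a j"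
proof -
  define S where "S = (if j \<ge> 3 then a (j - 2) else 0) + a (j + 2)"
  have "1 + r \<noteq> 0"
    using assms by linarith
  then have "8 * (1 + r)^2 * Lop_cofactor r a j = 2 * (1 + r) * a j - (1 - r) * S"
    unfolding Lop_cofactor_def S_def[symmetric]
    by (simp add: right_diff_distrib power2_eq_square) (simp add: field_simps)
  then show ?thesis
    using assms unfolding S_def[symmetric] by (auto simp: field_simps)
qed

lemma Lop_1:
  assumes "r \<noteq> -1"
  shows "Lop r a 1 = ((1 - r) * a 3 - (3 * r + 1) * a 1) / (4 * (1 + r)^2)"
proof -
  have "1 + r \<noteq> 0"
    using assms by linarith
  have "Lop r a 1 = Kc 1 r * a 3 + yc 1 r * a 1"
    by (simp add: Lop_def numeral_3_eq_3)
  also have "\<dots> = ((1 - r) * a 3 - (3 * r + 1) * a 1) / (4 * (1 + r)^2)"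
    using \<open>1 + r \<noteq> 0\<close> unfolding Kc_def yc_def Bc_1[OF assms]
    by (simp add: field_simps)
  finally show ?thesis .
qed

lemma dLop_eq_if_Bc_eq_0:
  assumes "2 \<le> j" "r \<noteq> -1" "Bc j r = 0"
    and Bc_deriv: "((\<lambda>s. Bc j s) has_real_derivative D) (at r)"
  shows "dLop r a j = D * Lop_cofactor r a j"
proof -
  have "((\<lambda>s. Lop_cofactor s a j) has_real_derivative
          deriv (\<lambda>s. Lop_cofactor s a j) r) (at r)"
    using assms(2) unfolding Lop_cofactor_def
    by (intro DERIV_deriv_iff_real_differentiable[THEN iffD2]) (auto intro!: derivative_intros)
  from DERIV_mult[OF Bc_deriv this] show ?thesis
    unfolding dLop_def Lop_eq_Bc_mult_cofactor[OF assms(1)] using assms(3)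
    by (auto intro: DERIV_imp_deriv)
qed

lemma incseq_linear_recurrence:
  fixes u :: "nat \<Rightarrow> real"
  assumes "2 \<le> l" "\<And>n. u (n + 2) = l * u (n + 1) - u n" "0 \<le> u 0" "u 0 \<le> u 1"
  shows "incseq u"
proof -
  have "0 \<le> u n \<and> u n \<le> u (Suc n)" for n
  proof (induction n)
    case 0
    then show ?case using assms by simp
  next
    case (Suc n)
    have "u (n + 2) - u (n + 1) = (l - 2) * u (n + 1) + (u (n + 1) - u n)"
      using assms(2)[of n] by (simp add: algebra_simps)
    moreover have "0 \<le> (l - 2) * u (n + 1)"
      using Suc assms(1) by simp
    ultimately show ?case
      using Suc by simp
  qed
  then show ?thesis
    by (simp add: incseq_SucI)
qed

lemma linear_recurrence_tendsto_0_imp_0: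
  fixes u :: "nat \<Rightarrow> real"
  assumes "2 \<le> l" and "\<And>n. u (n + 2) = l * u (n + 1) - u n"
    and "0 \<le> u 0 * u 1" "\<bar>u 0\<bar> \<le> \<bar>u 1\<bar>" and "u \<longlonglongrightarrow> 0"
  shows "u n = 0"
proof -
  have nonneg_case: "v n = 0"
    if "\<And>n. v (n + 2) = l * v (n + 1) - v n" "0 \<le> v 0" "v 0 \<le> v 1" "v \<longlonglongrightarrow> 0"
    for v :: "nat \<Rightarrow> real"
  proof -
    have "incseq v"
      using incseq_linear_recurrence[OF assms(1)] that by blast
    then have "v 0 \<le> v n" "v n \<le> 0"
      using incseq_le[OF _ that(4)] by (auto simp: incseq_def)
    then show ?thesis
      using that(2) by simp
  qed
  show ?thesis
  proof (cases "0 \<le> u 1")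
    case True
    then have "0 \<le> u 0"
      using assms(3,4) by (cases "u 1 = 0") (auto simp: zero_le_mult_iff)
    then show ?thesis
      using nonneg_case[of u] assms True by simp
  next
    case False
    then have "u 0 \<le> 0"
      using assms(3) by (simp add: zero_le_mult_iff)
    moreover have "(\<lambda>n. - u n) \<longlonglongrightarrow> 0"
      using tendsto_minus[OF assms(5)] by simp
    ultimately show ?thesis
      using nonneg_case[of "\<lambda>n. - u n"] assms False by simp
  qed
qed

lemma coeff_eq_0_if_Lop_1_and_cofactors_eq_0:
  assumes r: "0 \<le> r" "r < 1" and "a 0 = 0" "a \<longlonglongrightarrow> 0"
    and "Lop r a 1 = 0" and cofactors: "\<And>j. 2 \<le> j \<Longrightarrow> Lop_cofactor r a j = 0"
  shows "a j = 0"
proof -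
  define l where "l = 2 * (1 + r) / (1 - r)"
  have "2 \<le> l"
    using r by (simp add: l_def field_simps)
  have rec: "(if j \<ge> 3 then a (j - 2) else 0) + a (j + 2) = l * a j" if "2 \<le> j" for j
    using cofactors[OF that] Lop_cofactor_eq_0_iff[of r a j] r by (simp add: l_def)
  have "(1 - r) * a 3 = (3 * r + 1) * a 1"
    using \<open>Lop r a 1 = 0\<close> Lop_1[of r a] r by simp
  then obtain \<kappa> where a3: "a 3 = \<kappa> * a 1" and "1 \<le> \<kappa>"
    using r by (intro that[of "(3 * r + 1) / (1 - r)"]) (simp_all add: field_simps)
  have even: "a (2 * n) = 0" for n
  proof (rule linear_recurrence_tendsto_0_imp_0[of l "\<lambda>n. a (2 * n)", OF \<open>2 \<le> l\<close>])
    show "a (2 * (n + 2)) = l * a (2 * (n + 1)) - a (2 * n)" for n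
      using rec[of "2 * n + 2"] \<open>a 0 = 0\<close> by (cases n) (auto simp: algebra_simps)
    show "(\<lambda>n. a (2 * n)) \<longlonglongrightarrow> 0"
      using LIMSEQ_subseq_LIMSEQ[OF \<open>a \<longlonglongrightarrow> 0\<close>, of "\<lambda>n. 2 * n"]
      by (simp add: strict_mono_def o_def)
  qed (use \<open>a 0 = 0\<close> in simp_all)
  have odd: "a (2 * n + 1) = 0" for n
  proof (rule linear_recurrence_tendsto_0_imp_0[of l "\<lambda>n. a (2 * n + 1)", OF \<open>2 \<le> l\<close>])
    show "a (2 * (n + 2) + 1) = l * a (2 * (n + 1) + 1) - a (2 * n + 1)" for n
      using rec[of "2 * n + 3"] by (simp add: algebra_simps numeral_eq_Suc)
    have "a 1 * a 3 = \<kappa> * (a 1)^2"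
      by (simp add: a3 power2_eq_square)
    then show "0 \<le> a (2 * 0 + 1) * a (2 * 1 + 1)"
      using \<open>1 \<le> \<kappa>\<close> by simp
    have "\<bar>a 3\<bar> = \<kappa> * \<bar>a 1\<bar>"
      using \<open>1 \<le> \<kappa>\<close> by (simp add: a3 abs_mult)
    then show "\<bar>a (2 * 0 + 1)\<bar> \<le> \<bar>a (2 * 1 + 1)\<bar>"
      using \<open>1 \<le> \<kappa>\<close> mult_right_mono[of 1 \<kappa> "\<bar>a 1\<bar>"] by simp
    show "(\<lambda>n. a (2 * n + 1)) \<longlonglongrightarrow> 0"
      using LIMSEQ_subseq_LIMSEQ[OF \<open>a \<longlonglongrightarrow> 0\<close>, of "\<lambda>n. 2 * n + 1"]
      by (simp add: strict_mono_def o_def)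
  qed
  show ?thesis
    using even odd by (cases "even j") (auto elim: evenE oddE)
qed

lemma Xc_imp_coeff_0_eq_0: "a \<in> Xc k c \<Longrightarrow> a 0 = 0"
  by (simp add: Xc_def)

lemma Xc_imp_coeffs_tendsto_0:
  assumes "a \<in> Xc k c"
  shows "a \<longlonglongrightarrow> 0"
proof -
  obtain F where "\<forall>x::real. (\<lambda>j. complex_of_real (a j * cos (real j * x))) sums F (complex_of_real x)"
    using assms unfolding Xc_def by blast
  then have "(\<lambda>j. complex_of_real (a j * cos (real j * 0))) sums F (complex_of_real 0)" ..
  then have "(\<lambda>j. complex_of_real (a j)) sums F 0"
    by simp
  then have "summable (\<lambda>j. complex_of_real (a j))"
    by (rule sums_summable)
  then have "(\<lambda>j. complex_of_real (a j)) \<longlonglongrightarrow> 0"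
    by (rule summable_LIMSEQ_zero)
  then show ?thesis
    using tendsto_of_real_iff[where 'a=complex, of a 0 sequentially] by simp
qed

lemma coeff_eq_0_if_Lop_eq_0_and_cofactor_eq_0:
  assumes r: "0 < r" "r < 1" and "Bc m r = 0"
    and "a 0 = 0" "a \<longlonglongrightarrow> 0" "\<And>j. Lop r a j = 0" "Lop_cofactor r a m = 0"
  shows "a j = 0"
proof (rule coeff_eq_0_if_Lop_1_and_cofactors_eq_0)
  show "Lop_cofactor r a j = 0" if "2 \<le> j" for j
  proof (cases "j = m")
    case False
    then have "Bc j r \<noteq> 0"
      using strict_mono_eq[OF strict_mono_Bc[OF r(1)], of j m] \<open>Bc m r = 0\<close> r by simp
    then show ?thesis
      using assms(6)[of j] Lop_eq_Bc_mult_cofactor[OF that] by simp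
  qed (use assms(7) in simp)
qed (use assms in auto)

theorem mainTheorem10:
  fixes m k :: nat and r c :: real and h0 :: "nat \<Rightarrow> real"
  assumes "m > 2" and "k \<ge> 3"
    and "0 < r" and "r < 1" and "Bc m r = 0"
    and "\<forall>s. 0 < s \<and> s < 1 \<and> Bc m s = 0 \<longrightarrow> s = r"
    and "c > 0"
    and "h0 \<in> Xc k c" and "h0 \<noteq> (\<lambda>j. 0)"
    and "{h \<in> Xc k c. Lop r h = (\<lambda>j. 0)} = {(\<lambda>j. t * h0 j) | t. True}"
  shows "dLop r h0 \<notin> Lop r ` Xc k c \<and> dLop r h0 m \<noteq> 0"
proof -
  have "2 \<le> m"
    using \<open>m > 2\<close> by simp
  have "h0 \<in> {h \<in> Xc k c. Lop r h = (\<lambda>j. 0)}"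
    unfolding assms(10) by (auto intro: exI[of _ 1])
  then have kernel: "Lop r h0 j = 0" for j
    by simp
  have dLop_m: "dLop r h0 m = dBc m r * Lop_cofactor r h0 m"
    using \<open>2 \<le> m\<close> assms(3,5) by (intro dLop_eq_if_Bc_eq_0 has_real_derivative_Bc) simp_all
  have "dBc m r > 0"
    using \<open>2 \<le> m\<close> assms(3,4) by (intro dBc_pos) simp_all
  have "dLop r h0 m \<noteq> 0"
  proof
    assume "dLop r h0 m = 0"
    then have "Lop_cofactor r h0 m = 0"
      using dLop_m \<open>dBc m r > 0\<close> by simp
    then have "h0 j = 0" for j
      by (rule coeff_eq_0_if_Lop_eq_0_and_cofactor_eq_0[OF assms(3-5)
          Xc_imp_coeff_0_eq_0[OF assms(8)] Xc_imp_coeffs_tendsto_0[OF assms(8)] kernel])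
    with \<open>h0 \<noteq> (\<lambda>j. 0)\<close> show False
      by auto
  qed
  moreover have "Lop r h m = 0" for h
    using Lop_eq_0_if_Bc_eq_0[OF \<open>2 \<le> m\<close> \<open>Bc m r = 0\<close>] .
  ultimately show ?thesis
    by auto
qed

end
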